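(* Let $R$ be an integral domain and $B=R[X_1,\dots,X_n]$ the polynomial ring with standard grading $B=\bigoplus_{i\ge0}B_i$ ($B_i$ the homogeneous polynomials of degree $i$, $B_0=R$). Let $A$ be a graded $R$-subalgebra of $B$ (i.e. $A=\bigoplus_{i\ge 0}(A\cap B_i)$), and suppose there is a retraction $\pi:B\to A$ with $\pi(B_+)\subseteq B_+$, where $B_+=\bigoplus_{i\ge1}B_i$. Then there is a finitely generated projective $R$-submodule $M$ of the free module $B_1=RX_1\oplus\cdots\oplus RX_n$ (namely a direct summand of $B_1$) such that $A$ is the $R$-subalgebra of $B$ generated by $M$ and $A\cong\operatorname{Sym}_R(M)$.
   Context: A retraction $\pi:B\to A$ is a ring homomorphism onto the subring $A$ which restricts to the identity on $A$ (equivalently an idempotent endomorphism of $B$ with image $A$); $\pi$ need not be graded. *)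

theory Defs
  imports "HOL-Library.Poly_Mapping"
begin

type_synonym ('v, 'a) mpoly = "('v \<Rightarrow>\<^sub>0 nat) \<Rightarrow>\<^sub>0 'a"

definition mconst :: "'a::zero \<Rightarrow> ('v, 'a) mpoly" where
  "mconst c = Poly_Mapping.single 0 c"

definition mvar :: "'v \<Rightarrow> ('v, 'a::{zero,one}) mpoly" where
  "mvar v = Poly_Mapping.single (Poly_Mapping.single v 1) 1"

definition mdeg :: "('v \<Rightarrow>\<^sub>0 nat) \<Rightarrow> nat" where
  "mdeg m = (\<Sum>v\<in>Poly_Mapping.keys m. Poly_Mapping.lookup m v)"

definition homog :: "nat \<Rightarrow> ('v, 'a::zero) mpoly set" where
  "homog i = {p. \<forall>m\<in>Poly_Mapping.keys p. mdeg m = i}"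

text \<open>B_+ : polynomials with zero constant term (= sum of B_i, i \<ge> 1)\<close>
definition posPart :: "('v, 'a::zero) mpoly set" where
  "posPart = {p. Poly_Mapping.lookup p 0 = 0}"

definition hcomp :: "nat \<Rightarrow> ('v, 'a::comm_monoid_add) mpoly \<Rightarrow> ('v, 'a) mpoly" where
  "hcomp i p = (\<Sum>m\<in>{m\<in>Poly_Mapping.keys p. mdeg m = i}. Poly_Mapping.single m (Poly_Mapping.lookup p m))"

definition r_subalgebra :: "('v, 'a::comm_ring_1) mpoly set \<Rightarrow> bool" where
  "r_subalgebra A \<longleftrightarrow> (\<forall>c. mconst c \<in> A) \<and> (\<forall>p\<in>A. \<forall>q\<in>A. p + q \<in> A \<and> p * q \<in> A)"

text \<open>graded: A is the direct sum of its intersections with the B_i\<close>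
definition graded_set :: "('v, 'a::comm_ring_1) mpoly set \<Rightarrow> bool" where
  "graded_set A \<longleftrightarrow> (\<forall>p\<in>A. \<forall>i. hcomp i p \<in> A)"

definition retraction :: "(('v, 'a::comm_ring_1) mpoly \<Rightarrow> ('v, 'a) mpoly) \<Rightarrow> ('v, 'a) mpoly set \<Rightarrow> bool" where
  "retraction \<pi> A \<longleftrightarrow> (\<forall>p q. \<pi> (p + q) = \<pi> p + \<pi> q) \<and> (\<forall>p q. \<pi> (p * q) = \<pi> p * \<pi> q)
      \<and> \<pi> 1 = 1 \<and> range \<pi> = A \<and> (\<forall>a\<in>A. \<pi> a = a)"

definition r_submodule :: "('v, 'a::comm_ring_1) mpoly set \<Rightarrow> bool" where
  "r_submodule M \<longleftrightarrow> 0 \<in> M \<and> (\<forall>p\<in>M. \<forall>q\<in>M. p + q \<in> M) \<and> (\<forall>c. \<forall>p\<in>M. mconst c * p \<in> M)"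

definition direct_summand_B1 :: "('v, 'a::comm_ring_1) mpoly set \<Rightarrow> bool" where
  "direct_summand_B1 M \<longleftrightarrow> r_submodule M \<and> M \<subseteq> homog 1 \<and>
     (\<exists>N. r_submodule N \<and> N \<subseteq> homog 1 \<and> M \<inter> N = {0} \<and>
          (\<forall>p\<in>homog 1. \<exists>a\<in>M. \<exists>b\<in>N. p = a + b))"

inductive_set alg_gen :: "('v, 'a::comm_ring_1) mpoly set \<Rightarrow> ('v, 'a) mpoly set"
  for S where
  gen_const: "mconst c \<in> alg_gen S"
| gen_base: "s \<in> S \<Longrightarrow> s \<in> alg_gen S"
| gen_add: "p \<in> alg_gen S \<Longrightarrow> q \<in> alg_gen S \<Longrightarrow> p + q \<in> alg_gen S"
| gen_mult: "p \<in> alg_gen S \<Longrightarrow> q \<in> alg_gen S \<Longrightarrow> p * q \<in> alg_gen S"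

text \<open>Symmetric algebra Sym_R(M) presented as R[x_m : m \<in> M] modulo the ideal
  generated by x_(m+m') - x_m - x_m' and x_(c m) - c x_m.
  Variables of the big polynomial ring are indexed by elements of B.\<close>

definition sym_polys :: "('w set) \<Rightarrow> ('w, 'a::zero) mpoly set" where
  "sym_polys M = {q. \<forall>m\<in>Poly_Mapping.keys q. Poly_Mapping.keys m \<subseteq> M}"

definition sym_gens :: "('v, 'a::comm_ring_1) mpoly set \<Rightarrow> (('v, 'a) mpoly, 'a) mpoly set" where
  "sym_gens M = {mvar (m + m') - mvar m - mvar m' | m m'. m \<in> M \<and> m' \<in> M}
              \<union> {mvar (mconst c * m) - mconst c * mvar m | c m. m \<in> M}"

inductive_set sym_ideal :: "('v, 'a::comm_ring_1) mpoly set \<Rightarrow> (('v, 'a) mpoly, 'a) mpoly set"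
  for M where
  ideal_zero: "0 \<in> sym_ideal M"
| ideal_step: "q \<in> sym_ideal M \<Longrightarrow> g \<in> sym_gens M \<Longrightarrow> a \<in> sym_polys M \<Longrightarrow> q + a * g \<in> sym_ideal M"

definition peval :: "('w \<Rightarrow> ('v, 'a::comm_ring_1) mpoly) \<Rightarrow> ('w, 'a) mpoly \<Rightarrow> ('v, 'a) mpoly" where
  "peval f q = (\<Sum>m\<in>Poly_Mapping.keys q. mconst (Poly_Mapping.lookup q m) * (\<Prod>v\<in>Poly_Mapping.keys m. f v ^ Poly_Mapping.lookup m v))"

text \<open>The canonical R-algebra map Sym_R(M) \<rightarrow> B, x_m \<mapsto> m, is an isomorphism onto A:
  its image is A and its kernel is exactly the defining ideal of Sym_R(M).\<close>
definition sym_iso :: "('v, 'a::comm_ring_1) mpoly set \<Rightarrow> ('v, 'a) mpoly set \<Rightarrow> bool" where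
  "sym_iso M A \<longleftrightarrow> peval id ` sym_polys M = A \<and>
     (\<forall>q\<in>sym_polys M. peval id q = 0 \<longleftrightarrow> q \<in> sym_ideal M)"

end

theory Submission
  imports Defs
begin

text \<open>Let \<open>M = A \<inter> B\<^sub>1\<close> and let \<open>P\<close> be \<open>\<pi>\<close> followed by taking the component of degree 1.
  \<open>P\<close> is an \<open>R\<close>-linear retraction of \<open>B\<^sub>1\<close> onto \<open>M\<close>, so \<open>M\<close> is a direct summand with
  complement \<open>ker P \<inter> B\<^sub>1\<close>. A monomial \<open>X\<^sub>u m\<close> of degree \<open>d \<ge> 2\<close> is sent by \<open>\<pi>\<close> to
  \<open>\<pi>(X\<^sub>u) \<pi>(m)\<close>, a product of two elements of \<open>A\<close> without constant term, whose component
  of degree \<open>d\<close> only involves components of degree \<open>< d\<close>; by induction on the degree,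
  \<open>A\<close> is generated by \<open>M\<close>. Finally, the substitution \<open>X\<^sub>v \<mapsto> x\<^bsub>P X\<^sub>v\<^esub>\<close> inverts the
  evaluation \<open>Sym(M) \<rightarrow> B\<close> modulo the relations of \<open>Sym(M)\<close>, so the evaluation is injective.\<close>

abbreviation lookup :: "('k \<Rightarrow>\<^sub>0 'b::zero) \<Rightarrow> 'k \<Rightarrow> 'b"
  where "lookup \<equiv> Poly_Mapping.lookup"
abbreviation keys :: "('k \<Rightarrow>\<^sub>0 'b::zero) \<Rightarrow> 'k set"
  where "keys \<equiv> Poly_Mapping.keys"
abbreviation single :: "'k \<Rightarrow> 'b::zero \<Rightarrow> 'k \<Rightarrow>\<^sub>0 'b"
  where "single \<equiv> Poly_Mapping.single"

lemma sum_single_lookup: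
  fixes p :: "'k \<Rightarrow>\<^sub>0 'b::comm_monoid_add"
  assumes "finite S" "keys p \<subseteq> S"
  shows "(\<Sum>k\<in>S. single k (lookup p k)) = p"
proof (rule poly_mapping_eqI)
  fix x
  have "lookup (\<Sum>k\<in>S. single k (lookup p k)) x = (\<Sum>k\<in>S. if k = x then lookup p x else 0)"
    by (simp add: lookup_sum lookup_single when_def) (rule sum.cong, auto)
  also have "\<dots> = lookup p x"
    using assms by (auto simp: in_keys_iff)
  finally show "lookup (\<Sum>k\<in>S. single k (lookup p k)) x = lookup p x" .
qed

lemma sum_single_lookup_keys: "(\<Sum>k\<in>keys p. single k (lookup p k)) = (p :: 'k \<Rightarrow>\<^sub>0 'b::comm_monoid_add)"
  by (rule sum_single_lookup) auto

lemma mconst_add: "mconst (a + b) = mconst a + mconst b"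
  by (simp add: mconst_def single_add)

lemma mconst_0 [simp]: "mconst 0 = 0"
  by (simp add: mconst_def)

lemma mconst_1 [simp]: "mconst 1 = 1"
  by (simp add: mconst_def)

lemma mconst_mult: "mconst (a * b) = (mconst a * mconst b :: ('v, 'a::comm_ring_1) mpoly)"
  by (simp add: mconst_def mult_single)

lemma mconst_mult_single: "mconst c * single k a = (single k (c * a) :: ('v, 'a::comm_ring_1) mpoly)"
  by (simp add: mconst_def mult_single)

lemma lookup_mconst_mult: "lookup (mconst c * (p :: ('v, 'a::comm_ring_1) mpoly)) k = c * lookup p k"
  by (simp add: mconst_def flip: mult_map_scale_conv_mult) (simp add: map.rep_eq when_def)

lemma keys_mconst_mult_subset: "keys (mconst c * (p :: ('v, 'a::comm_ring_1) mpoly)) \<subseteq> keys p"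
  by (auto simp: in_keys_iff lookup_mconst_mult)

lemma mvar_power: "mvar v ^ n = (single (single v n) 1 :: ('w, 'a::comm_ring_1) mpoly)"
  by (induction n) (simp_all add: mvar_def mult_single single_add[symmetric])

lemma mvar_times_single:
  "mvar v * single k c = (single (single v 1 + k) c :: ('w, 'a::comm_ring_1) mpoly)"
  by (simp add: mvar_def mult_single)

lemma keys_add_monomial: "keys ((a :: 'w \<Rightarrow>\<^sub>0 nat) + b) = keys a \<union> keys b"
  by (auto simp: in_keys_iff lookup_add)

lemma monomial_split_variable:
  assumes "(k :: 'w \<Rightarrow>\<^sub>0 nat) \<noteq> 0"
  obtains u k' where "k = single u 1 + k'"
proof -
  obtain u where u: "u \<in> keys k"
    using assms by (metis all_not_in_conv keys_eq_empty)
  have "k = single u 1 + Poly_Mapping.update u (lookup k u - 1) k"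
    using u by (intro poly_mapping_eqI)
      (auto simp: lookup_add lookup_update lookup_single when_def in_keys_iff)
  then show thesis by (rule that)
qed

section \<open>Evaluation of polynomials\<close>

definition eval_monomial :: "('w \<Rightarrow> ('v, 'a::comm_ring_1) mpoly) \<Rightarrow> ('w \<Rightarrow>\<^sub>0 nat) \<Rightarrow> ('v, 'a) mpoly"
  where "eval_monomial f m = (\<Prod>v\<in>keys m. f v ^ lookup m v)"

lemma eval_monomial_superset:
  "finite T \<Longrightarrow> keys m \<subseteq> T \<Longrightarrow> eval_monomial f m = (\<Prod>v\<in>T. f v ^ lookup m v)"
  unfolding eval_monomial_def by (rule prod.mono_neutral_left) (auto simp: in_keys_iff)

lemma eval_monomial_add: "eval_monomial f (a + b) = eval_monomial f a * eval_monomial f b"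
proof -
  let ?T = "keys a \<union> keys b"
  have "eval_monomial f (a + b) = (\<Prod>v\<in>?T. f v ^ lookup (a + b) v)"
    by (rule eval_monomial_superset) (auto simp: keys_add_monomial)
  also have "\<dots> = (\<Prod>v\<in>?T. f v ^ lookup a v * f v ^ lookup b v)"
    by (simp add: lookup_add power_add)
  also have "\<dots> = eval_monomial f a * eval_monomial f b"
    by (simp add: prod.distrib eval_monomial_superset[of ?T a] eval_monomial_superset[of ?T b])
  finally show ?thesis .
qed

lemma peval_superset:
  "finite S \<Longrightarrow> keys q \<subseteq> S \<Longrightarrow> peval f q = (\<Sum>m\<in>S. mconst (lookup q m) * eval_monomial f m)"
  unfolding peval_def eval_monomial_def by (rule sum.mono_neutral_left) (auto simp: in_keys_iff)

lemma peval_single: "peval f (single m c) = mconst c * eval_monomial f m"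
  by (simp add: peval_def eval_monomial_def)

lemma peval_0 [simp]: "peval f 0 = 0"
  by (simp add: peval_def)

lemma peval_add: "peval f (p + q) = peval f p + peval f q"
proof -
  let ?S = "keys p \<union> keys q"
  have "peval f (p + q) = (\<Sum>m\<in>?S. mconst (lookup (p + q) m) * eval_monomial f m)"
    using keys_add[of p q] by (rule peval_superset[rotated]) simp
  also have "\<dots> = (\<Sum>m\<in>?S. mconst (lookup p m) * eval_monomial f m
                                    + mconst (lookup q m) * eval_monomial f m)"
    by (simp add: lookup_add mconst_add distrib_right)
  also have "\<dots> = peval f p + peval f q"
    by (simp add: sum.distrib peval_superset[of ?S p] peval_superset[of ?S q])
  finally show ?thesis .
qed

lemma peval_sum: "peval f (sum g S) = (\<Sum>x\<in>S. peval f (g x))"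
  by (induction S rule: infinite_finite_induct) (auto simp: peval_add)

lemma peval_diff: "peval f (p - q) = peval f p - peval f q"
  by (metis add_diff_cancel peval_add diff_add_cancel)

lemma peval_mult: "peval f (p * q) = peval f p * peval f q"
proof -
  have "p * q = (\<Sum>a\<in>keys p. single a (lookup p a)) * (\<Sum>b\<in>keys q. single b (lookup q b))"
    by (simp add: sum_single_lookup_keys)
  also have "\<dots> = (\<Sum>a\<in>keys p. \<Sum>b\<in>keys q. single (a + b) (lookup p a * lookup q b))"
    by (simp add: sum_product mult_single)
  finally have "peval f (p * q) = (\<Sum>a\<in>keys p. \<Sum>b\<in>keys q.
      (mconst (lookup p a) * eval_monomial f a) * (mconst (lookup q b) * eval_monomial f b))"
    by (simp add: peval_sum peval_single mconst_mult eval_monomial_add mult_ac)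
  also have "\<dots> = peval f p * peval f q"
    by (simp add: peval_def eval_monomial_def sum_product)
  finally show ?thesis .
qed

lemma peval_mconst: "peval f (mconst c) = mconst c"
  by (simp add: mconst_def peval_single eval_monomial_def)

lemma peval_1 [simp]: "peval f 1 = 1"
  using peval_mconst[of f 1] by (simp only: mconst_1)

lemma peval_power: "peval f (p ^ n) = peval f p ^ n"
  by (induction n) (auto simp: peval_mult)

lemma peval_prod: "peval f (prod g S) = (\<Prod>x\<in>S. peval f (g x))"
  by (induction S rule: infinite_finite_induct) (auto simp: peval_mult)

lemma peval_mvar: "peval f (mvar v) = f v"
  by (simp add: mvar_def peval_single eval_monomial_def)

lemma prod_single_1: "(\<Prod>x\<in>S. single (h x) 1) = (single (sum h S) 1 :: ('w, 'a::comm_ring_1) mpoly)"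
  by (induction S rule: infinite_finite_induct) (auto simp: mult_single)

lemma peval_mvar_eq: "peval mvar q = (q :: ('w, 'a::comm_ring_1) mpoly)"
proof -
  have "eval_monomial mvar m = (single m 1 :: ('w, 'a) mpoly)" for m :: "'w \<Rightarrow>\<^sub>0 nat"
    by (simp add: eval_monomial_def mvar_power prod_single_1 sum_single_lookup_keys)
  then show ?thesis
    by (simp add: peval_def eval_monomial_def[symmetric] mconst_mult_single sum_single_lookup_keys)
qed

lemma peval_peval: "peval g (peval f q) = peval (\<lambda>v. peval g (f v)) q"
  unfolding peval_def[of f q] peval_def[of "\<lambda>v. peval g (f v)" q]
  by (simp add: peval_sum peval_mult peval_mconst peval_prod peval_power)

section \<open>The grading\<close>

lemma mdeg_superset: "finite S \<Longrightarrow> keys m \<subseteq> S \<Longrightarrow> mdeg m = (\<Sum>v\<in>S. lookup m v)"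
  unfolding mdeg_def by (rule sum.mono_neutral_left) (auto simp: in_keys_iff)

lemma mdeg_add: "mdeg (a + b) = mdeg a + mdeg b"
proof -
  let ?S = "keys a \<union> keys b"
  have "mdeg (a + b) = (\<Sum>v\<in>?S. lookup (a + b) v)"
    by (rule mdeg_superset) (auto simp: keys_add_monomial)
  then show ?thesis
    by (simp add: lookup_add sum.distrib mdeg_superset[of ?S a] mdeg_superset[of ?S b])
qed

lemma mdeg_eq_0_iff: "mdeg m = 0 \<longleftrightarrow> m = 0"
  by (auto simp: mdeg_def in_keys_iff intro: poly_mapping_eqI)

lemma mdeg_0 [simp]: "mdeg 0 = 0"
  by (simp add: mdeg_eq_0_iff)

lemma mdeg_single: "mdeg (single v n) = n"
  by (simp add: mdeg_def)

lemma mdeg_eq_1: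
  assumes "mdeg k = 1"
  obtains u where "k = single u 1"
proof -
  have "card (keys k) \<le> mdeg k"
    unfolding mdeg_def card_eq_sum by (rule sum_mono) (simp add: in_keys_iff Suc_le_eq)
  moreover have "keys k \<noteq> {}"
    using assms mdeg_eq_0_iff[of k] by auto
  ultimately have "card (keys k) = 1"
    using assms card_0_eq[OF finite_keys, of k] by linarith
  then obtain u where u: "keys k = {u}"
    by (rule card_1_singletonE)
  then have "lookup k u = 1"
    using assms by (simp add: mdeg_def)
  then have "k = single u 1"
    using u by (intro poly_mapping_eqI) (auto simp: lookup_single when_def in_keys_iff)
  then show thesis by (rule that)
qed

lemma lookup_hcomp: "lookup (hcomp i p) m = (if mdeg m = i then lookup p m else 0)"
proof -
  have "lookup (hcomp i p) m = (\<Sum>k\<in>{k\<in>keys p. mdeg k = i}. if k = m then lookup p m else 0)"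
    by (simp add: hcomp_def lookup_sum lookup_single when_def)
  then show ?thesis by (auto simp: in_keys_iff)
qed

lemma hcomp_add: "hcomp i (p + q) = hcomp i p + hcomp i q"
  by (rule poly_mapping_eqI) (simp add: lookup_hcomp lookup_add)

lemma hcomp_0 [simp]: "hcomp i 0 = 0"
  by (rule poly_mapping_eqI) (simp add: lookup_hcomp)

lemma hcomp_sum: "hcomp i (sum g S) = (\<Sum>x\<in>S. hcomp i (g x))"
  by (induction S rule: infinite_finite_induct) (auto simp: hcomp_add)

lemma hcomp_mconst_mult: "hcomp i (mconst c * p) = mconst c * hcomp i (p :: ('v, 'a::comm_ring_1) mpoly)"
  by (rule poly_mapping_eqI) (simp add: lookup_hcomp lookup_mconst_mult)

lemma hcomp_in_homog: "hcomp i p \<in> homog i"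
  by (auto simp: homog_def in_keys_iff lookup_hcomp split: if_splits)

lemma hcomp_homog: "p \<in> homog j \<Longrightarrow> hcomp i p = (if i = j then p else 0)"
  by (rule poly_mapping_eqI) (auto simp: lookup_hcomp homog_def in_keys_iff)

lemma sum_hcomp:
  assumes "\<forall>m\<in>keys p. mdeg m \<le> N"
  shows "(\<Sum>i\<le>N. hcomp i p) = p"
proof (rule poly_mapping_eqI)
  fix m
  have "lookup (\<Sum>i\<le>N. hcomp i p) m = (\<Sum>i\<le>N. if mdeg m = i then lookup p m else 0)"
    by (simp add: lookup_sum lookup_hcomp)
  also have "\<dots> = lookup p m"
    using assms by (auto simp: in_keys_iff)
  finally show "lookup (\<Sum>i\<le>N. hcomp i p) m = lookup p m" .
qed

lemma zero_in_homog [simp]: "0 \<in> homog i"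
  by (simp add: homog_def)

lemma homog_add: "p \<in> homog i \<Longrightarrow> q \<in> homog i \<Longrightarrow> p + q \<in> homog i"
  using keys_add[of p q] by (auto simp: homog_def)

lemma homog_diff: "p \<in> homog i \<Longrightarrow> q \<in> homog i \<Longrightarrow> p - q \<in> homog i"
  using keys_diff[of p q] by (auto simp: homog_def)

lemma mconst_mult_homog: "p \<in> homog i \<Longrightarrow> mconst c * (p :: ('v, 'a::comm_ring_1) mpoly) \<in> homog i"
  using keys_mconst_mult_subset by (fastforce simp: homog_def)

lemma homog_mult: "p \<in> homog i \<Longrightarrow> q \<in> homog j \<Longrightarrow> p * (q :: ('v, 'a::comm_ring_1) mpoly) \<in> homog (i + j)"
  using keys_mult[of p q] by (auto simp: homog_def mdeg_add)

lemma homog_0_eq_mconst: "p \<in> homog 0 \<Longrightarrow> p = mconst (lookup p 0)"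
  by (rule poly_mapping_eqI)
    (auto simp: homog_def mconst_def lookup_single mdeg_eq_0_iff in_keys_iff when_def)

lemma hcomp_0_posPart: "p \<in> posPart \<Longrightarrow> hcomp 0 p = 0"
  by (rule poly_mapping_eqI) (auto simp: lookup_hcomp posPart_def mdeg_eq_0_iff)

lemma hcomp_mult:
  "hcomp d (u * w) = (\<Sum>i\<le>d. hcomp i u * hcomp (d - i) (w :: ('v, 'a::comm_ring_1) mpoly))"
proof -
  define N where "N = max d (Max (mdeg ` (keys u \<union> keys w)))"
  have "\<forall>m\<in>keys u. mdeg m \<le> N" "\<forall>m\<in>keys w. mdeg m \<le> N" "d \<le> N"
    by (auto simp: N_def le_max_iff_disj)
  then have "u * w = (\<Sum>i\<le>N. hcomp i u) * (\<Sum>j\<le>N. hcomp j w)"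
    by (simp add: sum_hcomp)
  then have "hcomp d (u * w) = (\<Sum>i\<le>N. \<Sum>j\<le>N. hcomp d (hcomp i u * hcomp j w))"
    by (simp only: sum_product hcomp_sum)
  also have "\<dots> = (\<Sum>i\<le>N. \<Sum>j\<le>N. if j = d - i \<and> i \<le> d then hcomp i u * hcomp j w else 0)"
  proof (intro sum.cong refl)
    fix i j
    have "hcomp i u * hcomp j w \<in> homog (i + j)"
      by (intro homog_mult hcomp_in_homog)
    then show "hcomp d (hcomp i u * hcomp j w) = (if j = d - i \<and> i \<le> d then hcomp i u * hcomp j w else 0)"
      by (auto simp: hcomp_homog)
  qed
  also have "\<dots> = (\<Sum>i\<le>N. if i \<le> d then hcomp i u * hcomp (d - i) w else 0)"
    using \<open>d \<le> N\<close> by (intro sum.cong refl) (auto simp: sum.delta')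
  also have "\<dots> = (\<Sum>i\<le>d. hcomp i u * hcomp (d - i) w)"
    using \<open>d \<le> N\<close> by (intro sum.mono_neutral_cong_right) auto
  finally show ?thesis .
qed

lemma single_in_posPart: "k \<noteq> 0 \<Longrightarrow> single k c \<in> posPart"
  by (simp add: posPart_def lookup_single)

lemma mvar_in_posPart: "mvar v \<in> posPart"
  by (metis mvar_def single_in_posPart lookup_single_eq lookup_zero one_neq_zero)

lemma alg_gen_0: "0 \<in> alg_gen S"
  by (metis alg_gen.gen_const mconst_0)

lemma alg_gen_1: "1 \<in> alg_gen S"
  by (metis alg_gen.gen_const mconst_1)

lemma alg_gen_sum: "(\<And>x. x \<in> I \<Longrightarrow> f x \<in> alg_gen S) \<Longrightarrow> sum f I \<in> alg_gen S"
  by (induction I rule: infinite_finite_induct) (auto intro: alg_gen.gen_add alg_gen_0)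

lemma alg_gen_prod: "(\<And>x. x \<in> I \<Longrightarrow> f x \<in> alg_gen S) \<Longrightarrow> prod f I \<in> alg_gen S"
  by (induction I rule: infinite_finite_induct) (auto intro: alg_gen.gen_mult alg_gen_1)

lemma alg_gen_power: "p \<in> alg_gen S \<Longrightarrow> p ^ n \<in> alg_gen S"
  by (induction n) (auto intro: alg_gen.gen_mult alg_gen_1)

lemma hcomp_mult_in_alg_gen:
  assumes "u \<in> posPart" "w \<in> posPart"
    and "\<And>i. i < d \<Longrightarrow> hcomp i u \<in> alg_gen S" "\<And>i. i < d \<Longrightarrow> hcomp i w \<in> alg_gen S"
  shows "hcomp d (u * w) \<in> alg_gen S"
  unfolding hcomp_mult
proof (rule alg_gen_sum)
  fix i assume "i \<in> {..d}"
  then consider "i = 0" | "i = d" | "0 < i" "i < d"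
    by fastforce
  then show "hcomp i u * hcomp (d - i) w \<in> alg_gen S"
  proof cases
    case 1
    then show ?thesis by (simp add: hcomp_0_posPart assms(1) alg_gen_0)
  next
    case 2
    then show ?thesis by (simp add: hcomp_0_posPart assms(2) alg_gen_0)
  next
    case 3
    then show ?thesis by (intro alg_gen.gen_mult assms(3,4)) auto
  qed
qed

section \<open>The presentation of the symmetric algebra\<close>

lemma sym_polys_add: "p \<in> sym_polys M \<Longrightarrow> q \<in> sym_polys M \<Longrightarrow> p + q \<in> sym_polys M"
  using keys_add[of p q] by (auto simp: sym_polys_def)

lemma sym_polys_mult:
  "p \<in> sym_polys M \<Longrightarrow> q \<in> sym_polys M \<Longrightarrow> p * (q :: ('w, 'a::comm_ring_1) mpoly) \<in> sym_polys M"
  using keys_mult[of p q] by (fastforce simp: sym_polys_def keys_add_monomial)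

lemma sym_polys_mconst: "mconst c \<in> sym_polys M"
  by (simp add: sym_polys_def mconst_def)

lemma sym_polys_0: "0 \<in> sym_polys M"
  by (simp add: sym_polys_def)

lemma sym_polys_1: "1 \<in> sym_polys M"
  by (simp add: sym_polys_def)

lemma sym_polys_mvar: "m \<in> M \<Longrightarrow> mvar m \<in> sym_polys M"
  by (simp add: sym_polys_def mvar_def)

lemma sym_polys_sum: "(\<And>x. x \<in> I \<Longrightarrow> f x \<in> sym_polys M) \<Longrightarrow> sum f I \<in> sym_polys M"
  by (induction I rule: infinite_finite_induct) (auto intro: sym_polys_add sym_polys_0)

lemma sym_polys_prod:
  fixes f :: "'b \<Rightarrow> ('w, 'a::comm_ring_1) mpoly"
  shows "(\<And>x. x \<in> I \<Longrightarrow> f x \<in> sym_polys M) \<Longrightarrow> prod f I \<in> sym_polys M"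
  by (induction I rule: infinite_finite_induct) (auto intro: sym_polys_mult sym_polys_1)

lemma sym_polys_power: "p \<in> sym_polys M \<Longrightarrow> p ^ n \<in> sym_polys M" for p :: "('w, 'a::comm_ring_1) mpoly"
  by (induction n) (auto intro: sym_polys_mult sym_polys_1)

lemma peval_in_sym_polys: "(\<And>v. f v \<in> sym_polys M) \<Longrightarrow> peval f q \<in> sym_polys M"
  unfolding peval_def
  by (intro sym_polys_sum sym_polys_mult sym_polys_mconst sym_polys_prod sym_polys_power)

lemma sym_ideal_add:
  assumes "p \<in> sym_ideal M" "q \<in> sym_ideal M"
  shows "p + q \<in> sym_ideal M"
  using assms(2)
proof (induction q rule: sym_ideal.induct)
  case (ideal_step q g a)
  then have "(p + q) + a * g \<in> sym_ideal M"
    by (intro sym_ideal.ideal_step) auto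
  then show ?case by (simp add: add.assoc)
qed (simp add: assms(1))

lemma sym_ideal_mult:
  assumes "c \<in> sym_polys M" "q \<in> sym_ideal M"
  shows "c * q \<in> sym_ideal M"
  using assms(2)
proof (induction q rule: sym_ideal.induct)
  case (ideal_step q g a)
  then have "c * q + (c * a) * g \<in> sym_ideal M"
    by (intro sym_ideal.ideal_step sym_polys_mult assms(1))
  then show ?case by (simp add: distrib_left mult.assoc)
qed (simp add: sym_ideal.ideal_zero)

lemma sym_ideal_diff: "p \<in> sym_ideal M \<Longrightarrow> q \<in> sym_ideal M \<Longrightarrow> p - q \<in> sym_ideal M"
  using sym_ideal_add[of p M "(- 1) * q"] sym_ideal_mult[of "- 1" M q]
  by (simp add: sym_polys_def)

lemma sym_gens_subset_sym_ideal: "g \<in> sym_gens M \<Longrightarrow> g \<in> sym_ideal M"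
  using sym_ideal.ideal_step[OF sym_ideal.ideal_zero _ sym_polys_1] by simp

lemma sym_ideal_sum: "(\<And>x. x \<in> I \<Longrightarrow> f x \<in> sym_ideal M) \<Longrightarrow> sum f I \<in> sym_ideal M"
  by (induction I rule: infinite_finite_induct) (auto intro: sym_ideal_add sym_ideal.ideal_zero)

lemma sym_ideal_power_diff:
  assumes "a - b \<in> sym_ideal M" "a \<in> sym_polys M" "b \<in> sym_polys M"
  shows "a ^ n - b ^ n \<in> sym_ideal M"
proof (induction n)
  case (Suc n)
  have "a ^ Suc n - b ^ Suc n = a * (a ^ n - b ^ n) + b ^ n * (a - b)"
    by (simp add: algebra_simps)
  then show ?case
    using Suc assms by (auto intro!: sym_ideal_add sym_ideal_mult sym_polys_power)
qed (simp add: sym_ideal.ideal_zero)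

lemma sym_ideal_prod_diff:
  assumes "\<And>x. x \<in> I \<Longrightarrow> f x - g x \<in> sym_ideal M \<and> f x \<in> sym_polys M \<and> g x \<in> sym_polys M"
  shows "prod f I - prod g I \<in> sym_ideal M"
  using assms
proof (induction I rule: infinite_finite_induct)
  case (insert x I)
  have "prod f (insert x I) - prod g (insert x I) = f x * (prod f I - prod g I) + prod g I * (f x - g x)"
    using insert by (simp add: algebra_simps)
  moreover have "prod g I \<in> sym_polys M"
    using insert by (intro sym_polys_prod) auto
  ultimately show ?case
    using insert by (auto intro!: sym_ideal_add sym_ideal_mult)
qed (auto simp: sym_ideal.ideal_zero)

lemma peval_sym_ideal_congruent:
  fixes q :: "(('v, 'a::comm_ring_1) mpoly, 'a) mpoly"
  assumes q: "q \<in> sym_polys M"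
    and f: "\<And>v. v \<in> M \<Longrightarrow> f v \<in> sym_polys M \<and> f v - mvar v \<in> sym_ideal M"
  shows "peval f q - q \<in> sym_ideal M"
proof -
  have "peval f q - q = peval f q - peval mvar q"
    by (simp add: peval_mvar_eq)
  also have "\<dots> = (\<Sum>m\<in>keys q. mconst (lookup q m) *
      ((\<Prod>v\<in>keys m. f v ^ lookup m v) - (\<Prod>v\<in>keys m. mvar v ^ lookup m v)))"
    by (simp add: peval_def sum_subtractf right_diff_distrib)
  also have "\<dots> \<in> sym_ideal M"
  proof (intro sym_ideal_sum sym_ideal_mult sym_polys_mconst sym_ideal_prod_diff conjI)
    fix m v assume "m \<in> keys q" "v \<in> keys m"
    then have v: "v \<in> M"
      using q by (auto simp: sym_polys_def)
    show "f v ^ lookup m v - (mvar v :: (('v, 'a) mpoly, 'a) mpoly) ^ lookup m v \<in> sym_ideal M"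
      using f[OF v] sym_polys_mvar[OF v] by (intro sym_ideal_power_diff) auto
    show "f v ^ lookup m v \<in> sym_polys M"
      using f[OF v] by (intro sym_polys_power) auto
    show "(mvar v :: (('v, 'a) mpoly, 'a) mpoly) ^ lookup m v \<in> sym_polys M"
      using v by (intro sym_polys_power sym_polys_mvar)
  qed
  finally show ?thesis .
qed

lemma peval_id_sym_ideal: "q \<in> sym_ideal M \<Longrightarrow> peval id q = 0"
proof (induction q rule: sym_ideal.induct)
  case (ideal_step q g a)
  have "peval id g = 0"
    using ideal_step.hyps(2) by (auto simp: sym_gens_def peval_diff peval_mvar peval_mult peval_mconst)
  then show ?case
    using ideal_step.IH by (simp only: peval_add peval_mult) simp
qed simp

lemma peval_id_image_sym_polys:
  fixes M :: "('v, 'a::comm_ring_1) mpoly set"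
  shows "peval id ` sym_polys M = alg_gen M"
proof
  show "peval id ` sym_polys M \<subseteq> alg_gen M"
  proof clarify
    fix q :: "(('v, 'a) mpoly, 'a) mpoly"
    assume q: "q \<in> sym_polys M"
    have v: "v \<in> alg_gen M" if "m \<in> keys q" "v \<in> keys m" for m v
      using that q by (auto simp: sym_polys_def intro: alg_gen.gen_base)
    show "peval id q \<in> alg_gen M"
      unfolding peval_def
    proof (rule alg_gen_sum)
      fix m assume "m \<in> keys q"
      then show "mconst (lookup q m) * (\<Prod>v\<in>keys m. id v ^ lookup m v) \<in> alg_gen M"
        using v by (intro alg_gen.gen_mult alg_gen.gen_const alg_gen_prod alg_gen_power) simp
    qed
  qed
  show "alg_gen M \<subseteq> peval id ` sym_polys M"
  proof
    fix a assume "a \<in> alg_gen M"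
    then show "a \<in> peval id ` sym_polys M"
    proof (induction a rule: alg_gen.induct)
      case (gen_const c)
      show ?case
        by (rule image_eqI[where x = "mconst c"]) (simp_all add: peval_mconst sym_polys_mconst)
    next
      case (gen_base s)
      show ?case
        by (rule image_eqI[where x = "mvar s"]) (simp_all add: peval_mvar sym_polys_mvar gen_base)
    next
      case (gen_add p q)
      then obtain p' q' where "p' \<in> sym_polys M" "q' \<in> sym_polys M" "p = peval id p'" "q = peval id q'"
        by blast
      moreover from this have "p + q = peval id (p' + q')"
        by (simp only: peval_add)
      ultimately show ?case
        by (blast intro: sym_polys_add)
    next
      case (gen_mult p q)
      then obtain p' q' where "p' \<in> sym_polys M" "q' \<in> sym_polys M" "p = peval id p'" "q = peval id q'"
        by blast
      moreover from this have "p * q = peval id (p' * q')"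
        by (simp only: peval_mult)
      ultimately show ?case
        by (blast intro: sym_polys_mult)
    qed
  qed
qed

section \<open>Direct summands of the linear forms\<close>

locale linear_retract =
  fixes M :: "('v, 'a::comm_ring_1) mpoly set"
    and P :: "('v, 'a) mpoly \<Rightarrow> ('v, 'a) mpoly"
  assumes submodule: "r_submodule M"
    and subset_homog_1: "M \<subseteq> homog 1"
    and P_add: "P (p + q) = P p + P q"
    and P_mconst_mult: "P (mconst c * p) = mconst c * P p"
    and P_in: "P p \<in> M"
    and P_idem: "m \<in> M \<Longrightarrow> P m = m"
begin

lemma zero_in_M: "0 \<in> M"
  using submodule by (simp add: r_submodule_def)

lemma P_0: "P 0 = 0"
  using P_add[of 0 0] by simp

lemma P_diff: "P (p - q) = P p - P q"
  by (metis P_add add_diff_cancel diff_add_cancel)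

lemma direct_summand: "direct_summand_B1 M"
proof -
  define N where "N = {b \<in> homog 1. P b = 0}"
  have "r_submodule N"
    by (auto simp: r_submodule_def N_def P_0 P_add P_mconst_mult intro: homog_add mconst_mult_homog)
  moreover have "M \<inter> N = {0}"
    using P_idem zero_in_M by (auto simp: N_def)
  moreover have "\<exists>a\<in>M. \<exists>b\<in>N. p = a + b" if p: "p \<in> homog 1" for p
  proof -
    have "p - P p \<in> N"
      using p P_in subset_homog_1 by (auto simp: N_def P_diff P_idem intro: homog_diff)
    then show ?thesis
      using P_in[of p] by (intro bexI[of _ "P p"] bexI[of _ "p - P p"]) simp_all
  qed
  ultimately show ?thesis
    using submodule subset_homog_1 by (auto simp: direct_summand_B1_def N_def)
qed

text \<open>Inverts the evaluation \<open>x\<^sub>m \<mapsto> m\<close> modulo the defining ideal of \<open>Sym(M)\<close>.\<close>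

definition lift :: "('v, 'a) mpoly \<Rightarrow> (('v, 'a) mpoly, 'a) mpoly"
  where "lift = peval (\<lambda>v. mvar (P (mvar v)))"

lemma lift_in_sym_polys: "lift b \<in> sym_polys M"
  unfolding lift_def by (intro peval_in_sym_polys sym_polys_mvar P_in)

lemma mvar_P_sum_congruent:
  assumes "finite K"
  shows "(\<Sum>k\<in>K. mconst (c k) * mvar (P (b k))) - mvar (P (\<Sum>k\<in>K. mconst (c k) * b k)) \<in> sym_ideal M"
  using assms
proof (induction K rule: finite_induct)
  case empty
  have "mvar (0 + 0) - mvar 0 - mvar 0 \<in> sym_gens M"
    unfolding sym_gens_def using zero_in_M by blast
  then have "mvar (0 + 0) - mvar 0 - mvar 0 \<in> sym_ideal M"
    by (rule sym_gens_subset_sym_ideal)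
  then show ?case
    by (simp add: P_0)
next
  case (insert x K)
  let ?a = "mconst (c x) * P (b x)" and ?S = "P (\<Sum>k\<in>K. mconst (c k) * b k)"
  have "?a \<in> M"
    using submodule P_in by (simp add: r_submodule_def)
  have scale: "mvar ?a - mconst (c x) * mvar (P (b x)) \<in> sym_ideal M"
    using P_in by (intro sym_gens_subset_sym_ideal) (unfold sym_gens_def, blast)
  have add: "mvar (?a + ?S) - mvar ?a - mvar ?S \<in> sym_ideal M"
    using P_in \<open>?a \<in> M\<close> by (intro sym_gens_subset_sym_ideal) (unfold sym_gens_def, blast)
  have "P (mconst (c x) * b x + (\<Sum>k\<in>K. mconst (c k) * b k)) = ?a + ?S"
    by (simp add: P_add P_mconst_mult)
  then have "(\<Sum>k\<in>insert x K. mconst (c k) * mvar (P (b k))) - mvar (P (\<Sum>k\<in>insert x K. mconst (c k) * b k))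
    = ((\<Sum>k\<in>K. mconst (c k) * mvar (P (b k))) - mvar ?S) - (mvar ?a - mconst (c x) * mvar (P (b x)))
      - (mvar (?a + ?S) - mvar ?a - mvar ?S)"
    by (simp only: sum.insert[OF insert.hyps]) (simp add: algebra_simps)
  then show ?case
    by (simp only:) (intro sym_ideal_diff insert.IH scale add)
qed

lemma lift_congruent:
  assumes m: "m \<in> M"
  shows "lift m - mvar m \<in> sym_ideal M"
proof -
  have "lift (single k 1) = mvar (P (single k 1))" if "k \<in> keys m" for k
  proof -
    have "mdeg k = 1"
      using that m subset_homog_1 by (auto simp: homog_def)
    then obtain u where "k = single u 1"
      by (rule mdeg_eq_1)
    then show ?thesis
      by (simp add: lift_def peval_single eval_monomial_def mvar_def)
  qed
  then have "lift m = (\<Sum>k\<in>keys m. mconst (lookup m k) * mvar (P (single k 1)))"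
    by (simp add: lift_def peval_def eval_monomial_def peval_single)
  moreover have "m = (\<Sum>k\<in>keys m. mconst (lookup m k) * single k 1)"
    by (simp add: mconst_mult_single sum_single_lookup_keys)
  then have "mvar m = mvar (P (\<Sum>k\<in>keys m. mconst (lookup m k) * single k 1))"
    using P_idem[OF m] by simp
  ultimately have "lift m - mvar m = (\<Sum>k\<in>keys m. mconst (lookup m k) * mvar (P (single k 1)))
      - mvar (P (\<Sum>k\<in>keys m. mconst (lookup m k) * single k 1))"
    by simp
  also have "\<dots> \<in> sym_ideal M"
    by (rule mvar_P_sum_congruent) simp
  finally show ?thesis .
qed

lemma sym_iso_alg_gen: "sym_iso M (alg_gen M)"
  unfolding sym_iso_def
proof (intro conjI ballI peval_id_image_sym_polys iffI)
  fix q assume q: "q \<in> sym_polys M" and "peval id q = 0"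
  then have "lift (peval id q) = 0"
    by (simp add: lift_def)
  moreover have "lift (peval id q) - q \<in> sym_ideal M"
    using q lift_in_sym_polys lift_congruent
    by (simp add: lift_def peval_peval peval_sym_ideal_congruent)
  ultimately show "q \<in> sym_ideal M"
    using sym_ideal_diff[OF sym_ideal.ideal_zero] by fastforce
qed (rule peval_id_sym_ideal)

end

section \<open>Graded retracts of the polynomial ring\<close>

locale graded_retract =
  fixes A :: "('v, 'a::comm_ring_1) mpoly set"
    and \<pi> :: "('v, 'a) mpoly \<Rightarrow> ('v, 'a) mpoly"
  assumes subalgebra: "r_subalgebra A"
    and graded: "graded_set A"
    and retraction: "retraction \<pi> A"
    and posPart_preserved: "\<pi> ` posPart \<subseteq> posPart"
begin

lemma mconst_in_A: "mconst c \<in> A"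
  using subalgebra by (simp add: r_subalgebra_def)

lemma hcomp_in_A: "p \<in> A \<Longrightarrow> hcomp i p \<in> A"
  using graded by (simp add: graded_set_def)

lemma \<pi>_add: "\<pi> (p + q) = \<pi> p + \<pi> q"
  using retraction by (simp add: retraction_def)

lemma \<pi>_mult: "\<pi> (p * q) = \<pi> p * \<pi> q"
  using retraction by (simp add: retraction_def)

lemma \<pi>_in_A: "\<pi> p \<in> A"
  using retraction by (auto simp: retraction_def)

lemma \<pi>_idem: "a \<in> A \<Longrightarrow> \<pi> a = a"
  using retraction by (simp add: retraction_def)

lemma \<pi>_0: "\<pi> 0 = 0"
  using \<pi>_idem[OF mconst_in_A[of 0]] by simp

lemma \<pi>_sum: "\<pi> (sum f I) = (\<Sum>x\<in>I. \<pi> (f x))"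
  by (induction I rule: infinite_finite_induct) (auto simp: \<pi>_add \<pi>_0)

sublocale degree_1: linear_retract "A \<inter> homog 1" "\<lambda>b. hcomp 1 (\<pi> b)"
proof
  show "r_submodule (A \<inter> homog 1)"
    using subalgebra mconst_in_A[of 0]
    by (auto simp: r_submodule_def r_subalgebra_def intro: homog_add mconst_mult_homog)
  show "hcomp 1 (\<pi> (mconst c * p)) = mconst c * hcomp 1 (\<pi> p)" for c p
    by (simp add: \<pi>_mult \<pi>_idem mconst_in_A hcomp_mconst_mult)
qed (auto simp: \<pi>_add hcomp_add hcomp_in_A \<pi>_in_A hcomp_in_homog \<pi>_idem hcomp_homog)

lemma alg_gen_subset: "alg_gen (A \<inter> homog 1) \<subseteq> A"
proof
  fix p assume "p \<in> alg_gen (A \<inter> homog 1)"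
  then show "p \<in> A"
    using subalgebra by induction (auto simp: r_subalgebra_def)
qed

lemma hcomp_in_alg_gen: "a \<in> A \<Longrightarrow> hcomp d a \<in> alg_gen (A \<inter> homog 1)"
proof (induction d arbitrary: a rule: less_induct)
  case (less d)
  let ?b = "hcomp d a"
  have b: "?b \<in> A" "?b \<in> homog d"
    by (simp_all add: hcomp_in_A less.prems hcomp_in_homog)
  consider "d = 0" | "d = 1" | "2 \<le> d"
    by linarith
  then show ?case
  proof cases
    case 1
    then show ?thesis
      using b homog_0_eq_mconst by (metis alg_gen.gen_const)
  next
    case 2
    then show ?thesis
      using b by (simp add: alg_gen.gen_base)
  next
    case 3
    have "hcomp d (\<pi> (single k c)) \<in> alg_gen (A \<inter> homog 1)" if "k \<in> keys ?b" for k c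
    proof -
      have "mdeg k = d"
        using that b(2) by (simp add: homog_def)
      then obtain u k' where k: "k = single u 1 + k'"
        using 3 monomial_split_variable[of k] mdeg_eq_0_iff[of k] by auto
      then have "k' \<noteq> 0"
        using \<open>mdeg k = d\<close> 3 by (auto simp: mdeg_add mdeg_single)
      have "\<pi> (single k c) = \<pi> (mvar u) * \<pi> (single k' c)"
        by (simp only: k mvar_times_single[symmetric] \<pi>_mult)
      moreover have "\<pi> (mvar u) \<in> posPart" "\<pi> (single k' c) \<in> posPart"
        using posPart_preserved mvar_in_posPart[of u] single_in_posPart[OF \<open>k' \<noteq> 0\<close>] by blast+
      ultimately show ?thesis
        using less.IH \<pi>_in_A by (simp add: hcomp_mult_in_alg_gen)
    qed
    then have "hcomp d (\<pi> (\<Sum>k\<in>keys ?b. single k (lookup ?b k))) \<in> alg_gen (A \<inter> homog 1)"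
      by (simp add: \<pi>_sum hcomp_sum alg_gen_sum)
    moreover have "hcomp d (\<pi> ?b) = ?b"
      using b by (simp add: \<pi>_idem hcomp_homog)
    ultimately show ?thesis
      by (simp only: sum_single_lookup_keys)
  qed
qed

lemma alg_gen_eq: "alg_gen (A \<inter> homog 1) = A"
proof
  show "A \<subseteq> alg_gen (A \<inter> homog 1)"
  proof
    fix a assume "a \<in> A"
    have "a = (\<Sum>i\<le>Max (mdeg ` keys a). hcomp i a)"
      by (simp add: sum_hcomp)
    also have "\<dots> \<in> alg_gen (A \<inter> homog 1)"
      using \<open>a \<in> A\<close> by (intro alg_gen_sum hcomp_in_alg_gen)
    finally show "a \<in> alg_gen (A \<inter> homog 1)" .
  qed
qed (rule alg_gen_subset)

end

theorem theorem5p13: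
  fixes A :: "('v::finite, 'a::idom) mpoly set"
    and \<pi> :: "('v, 'a) mpoly \<Rightarrow> ('v, 'a) mpoly"
  assumes "r_subalgebra A"
    and "graded_set A"
    and "retraction \<pi> A"
    and "\<pi> ` posPart \<subseteq> posPart"
  shows "\<exists>M. direct_summand_B1 M \<and> alg_gen M = A \<and> sym_iso M A"
proof -
  interpret graded_retract A \<pi>
    using assms by unfold_locales
  show ?thesis
    using degree_1.direct_summand degree_1.sym_iso_alg_gen alg_gen_eq by metis
qed

end
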